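(* The quiver $Q'=Q^{\mathrm{cut}}(Z)$ is acyclic.
   Context: $(Q,Z)$ is a gentle pair, i.e. a locally gentle pair (every vertex is head, resp. tail, of at most two arrows; every arrow $b$ gives at most one admissible and at most one inadmissible length-2 path of the form $cb$, and likewise of the form $ba$) with only finitely many admissible paths (paths with no subpath in $Z$); equivalently, the semilinear gentle algebra $\Lambda=K_{\boldsymbol{\sigma}}Q/\langle Z\rangle$ is finite-dimensional over the division ring $K$. A vertex $v$ is relational if $v=t(b)=h(a)$ for some $ba\in Z$. The Zembyk excision $Q'=Q^{\mathrm{cut}}(Z)$ (denoted in the paper by $Q$ with a scissors superscript) has vertices $v'$ for non-relational $v\in Q_0$ and two distinct vertices $v(\sharp),v(\flat)$ for each relational $v$, and arrows $a'$ for $a\in Q_1$; heads and tails are those of $Q$ at non-relational vertices, while at a relational vertex $v$ the incident arrows are reattached to $v(\sharp)$ or $v(\flat)$ so that for arrows $a,b$ with $h(a)=v=t(b)$, $b'a'$ is a path in $Q'$ exactly when $ba\notin Z$ (in particular for $ba\in Z$, $\{h'(a'),t'(b')\}=\{v(\sharp),v(\flat)\}$). *)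

theory Defs
  imports Main
begin

text \<open>A length-2 path "b a" (first a, then b) is represented by the pair (b, a), with t b = h a.
  Z is a set of such pairs.  A path of arrows is a list [a1,...,an] traversed left to right,
  i.e. h a_i = t a_(i+1).\<close>

definition quiver :: "'v set \<Rightarrow> 'a set \<Rightarrow> ('a \<Rightarrow> 'v) \<Rightarrow> ('a \<Rightarrow> 'v) \<Rightarrow> bool" where
  "quiver Q0 Q1 h t \<longleftrightarrow> (\<forall>a\<in>Q1. h a \<in> Q0 \<and> t a \<in> Q0)"

definition composable :: "('a \<Rightarrow> 'v) \<Rightarrow> ('a \<Rightarrow> 'v) \<Rightarrow> 'a list \<Rightarrow> bool" where
  "composable h t p \<longleftrightarrow> (\<forall>i. Suc i < length p \<longrightarrow> h (p ! i) = t (p ! Suc i))"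

definition is_path :: "'a set \<Rightarrow> ('a \<Rightarrow> 'v) \<Rightarrow> ('a \<Rightarrow> 'v) \<Rightarrow> 'a list \<Rightarrow> bool" where
  "is_path Q1 h t p \<longleftrightarrow> p \<noteq> [] \<and> set p \<subseteq> Q1 \<and> composable h t p"

definition admissible :: "'a set \<Rightarrow> ('a \<Rightarrow> 'v) \<Rightarrow> ('a \<Rightarrow> 'v) \<Rightarrow> ('a \<times> 'a) set \<Rightarrow> 'a list \<Rightarrow> bool" where
  "admissible Q1 h t Z p \<longleftrightarrow> is_path Q1 h t p \<and>
     (\<forall>i. Suc i < length p \<longrightarrow> (p ! Suc i, p ! i) \<notin> Z)"

definition locally_gentle ::
  "'v set \<Rightarrow> 'a set \<Rightarrow> ('a \<Rightarrow> 'v) \<Rightarrow> ('a \<Rightarrow> 'v) \<Rightarrow> ('a \<times> 'a) set \<Rightarrow> bool" where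
  "locally_gentle Q0 Q1 h t Z \<longleftrightarrow>
     quiver Q0 Q1 h t \<and>
     Z \<subseteq> {(b, a). a \<in> Q1 \<and> b \<in> Q1 \<and> t b = h a} \<and>
     (\<forall>v\<in>Q0. finite {a\<in>Q1. h a = v} \<and> card {a\<in>Q1. h a = v} \<le> 2) \<and>
     (\<forall>v\<in>Q0. finite {a\<in>Q1. t a = v} \<and> card {a\<in>Q1. t a = v} \<le> 2) \<and>
     (\<forall>b\<in>Q1. card {c\<in>Q1. t c = h b \<and> (c, b) \<notin> Z} \<le> 1 \<and>
              card {c\<in>Q1. t c = h b \<and> (c, b) \<in> Z} \<le> 1) \<and>
     (\<forall>b\<in>Q1. card {a\<in>Q1. h a = t b \<and> (b, a) \<notin> Z} \<le> 1 \<and>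
              card {a\<in>Q1. h a = t b \<and> (b, a) \<in> Z} \<le> 1)"

text \<open>Gentle pair: locally gentle with finitely many admissible paths
  (trivial paths = vertices, and nontrivial admissible paths).\<close>
definition gentle_pair ::
  "'v set \<Rightarrow> 'a set \<Rightarrow> ('a \<Rightarrow> 'v) \<Rightarrow> ('a \<Rightarrow> 'v) \<Rightarrow> ('a \<times> 'a) set \<Rightarrow> bool" where
  "gentle_pair Q0 Q1 h t Z \<longleftrightarrow> locally_gentle Q0 Q1 h t Z \<and>
     finite Q0 \<and> finite {p. admissible Q1 h t Z p}"

definition relational :: "'a set \<Rightarrow> ('a \<Rightarrow> 'v) \<Rightarrow> ('a \<Rightarrow> 'v) \<Rightarrow> ('a \<times> 'a) set \<Rightarrow> 'v \<Rightarrow> bool" where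
  "relational Q1 h t Z v \<longleftrightarrow> (\<exists>a\<in>Q1. \<exists>b\<in>Q1. (b, a) \<in> Z \<and> v = t b \<and> v = h a)"

text \<open>Vertices of the excision: v' for non-relational v, v(sharp) and v(flat) for relational v.\<close>
datatype 'v cut_vertex = Plain 'v | Sharp 'v | Flat 'v

definition cut_vertices :: "'v set \<Rightarrow> 'a set \<Rightarrow> ('a \<Rightarrow> 'v) \<Rightarrow> ('a \<Rightarrow> 'v) \<Rightarrow> ('a \<times> 'a) set
    \<Rightarrow> 'v cut_vertex set" where
  "cut_vertices Q0 Q1 h t Z =
     Plain ` {v\<in>Q0. \<not> relational Q1 h t Z v} \<union>
     Sharp ` {v\<in>Q0. relational Q1 h t Z v} \<union> Flat ` {v\<in>Q0. relational Q1 h t Z v}"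

text \<open>(h', t') is a Zembyk excision of (Q, Z): arrows a' are identified with a \<in> Q1.\<close>
definition zembyk_excision ::
  "'v set \<Rightarrow> 'a set \<Rightarrow> ('a \<Rightarrow> 'v) \<Rightarrow> ('a \<Rightarrow> 'v) \<Rightarrow> ('a \<times> 'a) set
   \<Rightarrow> ('a \<Rightarrow> 'v cut_vertex) \<Rightarrow> ('a \<Rightarrow> 'v cut_vertex) \<Rightarrow> bool" where
  "zembyk_excision Q0 Q1 h t Z h' t' \<longleftrightarrow>
     (\<forall>a\<in>Q1. (\<not> relational Q1 h t Z (h a) \<longrightarrow> h' a = Plain (h a)) \<and>
             (relational Q1 h t Z (h a) \<longrightarrow> h' a \<in> {Sharp (h a), Flat (h a)}) \<and>
             (\<not> relational Q1 h t Z (t a) \<longrightarrow> t' a = Plain (t a)) \<and>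
             (relational Q1 h t Z (t a) \<longrightarrow> t' a \<in> {Sharp (t a), Flat (t a)})) \<and>
     (\<forall>a\<in>Q1. \<forall>b\<in>Q1. h a = t b \<longrightarrow> (h' a = t' b \<longleftrightarrow> (b, a) \<notin> Z))"

definition acyclic_quiver :: "'a set \<Rightarrow> ('a \<Rightarrow> 'w) \<Rightarrow> ('a \<Rightarrow> 'w) \<Rightarrow> bool" where
  "acyclic_quiver Q1 h t \<longleftrightarrow>
     (\<nexists>p. is_path Q1 h t p \<and> h (last p) = t (hd p))"

end

theory Submission
  imports Defs
begin

text \<open>Two arrows of the excision meet at a vertex only if they meet in Q and their
  composite avoids Z, so every path of the excision is an admissible path of Q.
  An oriented cycle of the excision could be traversed arbitrarily often, giving
  infinitely many admissible paths of Q.\<close>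

lemma composable_append:
  assumes "composable h t p" "composable h t q" "p \<noteq> []" "q \<noteq> []"
    and "h (last p) = t (hd q)"
  shows "composable h t (p @ q)"
  unfolding composable_def
proof (intro allI impI)
  fix i assume i: "Suc i < length (p @ q)"
  consider "Suc i < length p" | "Suc i = length p" | "length p \<le> i" by linarith
  then show "h ((p @ q) ! i) = t ((p @ q) ! Suc i)"
  proof cases
    case 1
    then show ?thesis using assms(1) by (simp add: composable_def nth_append)
  next
    case 2
    then have "i = length p - 1" by simp
    then show ?thesis using 2 assms(3-5) by (simp add: nth_append last_conv_nth hd_conv_nth)
  next
    case 3
    then have "Suc (i - length p) < length q" using i by simp
    then show ?thesis using 3 assms(2) by (simp add: composable_def nth_append Suc_diff_le)
  qed
qed

lemma is_path_append:
  assumes "is_path Q1 h t p" "is_path Q1 h t q" "h (last p) = t (hd q)"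
  shows "is_path Q1 h t (p @ q)"
  using assms composable_append unfolding is_path_def by auto

lemma is_path_cycle_power:
  assumes "is_path Q1 h t p" "h (last p) = t (hd p)"
  shows "is_path Q1 h t (concat (replicate (Suc n) p))"
proof (induction n)
  case 0
  then show ?case using assms(1) by simp
next
  case (Suc n)
  have "p \<noteq> []" using assms(1) by (simp add: is_path_def)
  then have "hd (concat (replicate (Suc n) p)) = hd p" by simp
  then show ?case using is_path_append[OF assms(1) Suc] assms(2) by simp
qed

lemma acyclic_quiver_if_finite_paths:
  assumes "finite {p. is_path Q1 h t p}"
  shows "acyclic_quiver Q1 h t"
  unfolding acyclic_quiver_def
proof
  assume "\<exists>p. is_path Q1 h t p \<and> h (last p) = t (hd p)"
  then obtain p where p: "is_path Q1 h t p" "h (last p) = t (hd p)" by blast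
  define power where "power n = concat (replicate (Suc n) p)" for n
  have "length (power n) = Suc n * length p" for n
    by (simp add: power_def length_concat sum_list_replicate)
  moreover have "length p > 0" using p(1) by (simp add: is_path_def)
  ultimately have "inj power" by (intro injI) (metis mult_right_cancel nat.inject not_gr0)
  then have "infinite (range power)" by (simp add: finite_image_iff)
  moreover have "range power \<subseteq> {p. is_path Q1 h t p}"
    using is_path_cycle_power[OF p] by (auto simp: power_def)
  ultimately show False using assms finite_subset by blast
qed

fun cut_base :: "'v cut_vertex \<Rightarrow> 'v" where
  "cut_base (Plain v) = v"
| "cut_base (Sharp v) = v"
| "cut_base (Flat v) = v"

lemma zembyk_excision_cut_base:
  assumes "zembyk_excision Q0 Q1 h t Z h' t'" "a \<in> Q1"
  shows "cut_base (h' a) = h a" "cut_base (t' a) = t a"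
  using assms unfolding zembyk_excision_def
  by (cases "relational Q1 h t Z (h a)"; cases "relational Q1 h t Z (t a)"; force)+

lemma zembyk_excision_path_admissible:
  assumes "zembyk_excision Q0 Q1 h t Z h' t'" "is_path Q1 h' t' p"
  shows "admissible Q1 h t Z p"
proof -
  have "h (p ! i) = t (p ! Suc i) \<and> (p ! Suc i, p ! i) \<notin> Z" if "Suc i < length p" for i
  proof -
    have arrows: "p ! i \<in> Q1" "p ! Suc i \<in> Q1"
      using assms(2) that unfolding is_path_def by auto
    have meet: "h' (p ! i) = t' (p ! Suc i)"
      using assms(2) that unfolding is_path_def composable_def by blast
    then have "h (p ! i) = t (p ! Suc i)"
      using zembyk_excision_cut_base[OF assms(1)] arrows by metis
    with meet arrows assms(1) show ?thesis unfolding zembyk_excision_def by blast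
  qed
  then show ?thesis using assms(2) unfolding admissible_def is_path_def composable_def by blast
qed

theorem lemma5p20:
  fixes Q0 :: "'v set" and Q1 :: "'a set" and h t :: "'a \<Rightarrow> 'v"
    and Z :: "('a \<times> 'a) set" and h' t' :: "'a \<Rightarrow> 'v cut_vertex"
  assumes "gentle_pair Q0 Q1 h t Z"
    and "zembyk_excision Q0 Q1 h t Z h' t'"
  shows "acyclic_quiver Q1 h' t'"
proof (rule acyclic_quiver_if_finite_paths)
  have "{p. is_path Q1 h' t' p} \<subseteq> {p. admissible Q1 h t Z p}"
    using zembyk_excision_path_admissible[OF assms(2)] by blast
  moreover have "finite {p. admissible Q1 h t Z p}"
    using assms(1) by (simp add: gentle_pair_def)
  ultimately show "finite {p. is_path Q1 h' t' p}" by (rule finite_subset)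
qed

end
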